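(* For every index coding instance $\mathcal{I}=\{(i\mid A_i):i\in[m]\}$, $\beta_{\text{FP-UMCD}}(\mathcal{I})\le\beta_{\text{FPCC}}(\mathcal{I})$.
   Context: For $M\subseteq[m]$, the subinstance $M$ has receivers $M$ and side information $A_i\cap M$; $\beta_{\text{MDS}}(M)=|M|-\min_{i\in M}|M\cap A_i|$. $\beta_{\text{FPCC}}(\mathcal{I})=\min\sum_j\gamma_j\beta_{\text{MDS}}(M_j)$ and $\beta_{\text{FP-UMCD}}(\mathcal{I})=\min\sum_j\gamma_j\beta_{\text{UMCD}}(M_j)$, both minima over finite families of (possibly overlapping) subsets $M_1,\dots,M_n\subseteq[m]$ and weights $\gamma_j\in[0,1]$ with $\sum_{j:\,i\in M_j}\gamma_j\ge1$ for all $i\in[m]$. UMCD algorithm on a (sub)instance with receiver set $V$: $B_i=V\setminus(A_i\cup\{i\})$ (within $V$); $\boldsymbol{G}_{[k]}^L$ is the submatrix of the first $k$ rows and columns $L$ of a $0/1$ matrix, $\mathrm{mcm}$ the maximum number of $1$-entries in distinct rows and columns (0 if no columns); $N=V$, $k=0$; while $N\ne\emptyset$: $k\leftarrow k+1$; pick $w\in N$ minimizing $|A_w|$ (arbitrary tie-breaking); row $k$ is the indicator of $\{w\}\cup A_w$; remove $w$; remove every $i\in N$ with $\mathrm{mcm}(\boldsymbol{G}_{[k]}^{\{i\}\cup B_i})=\mathrm{mcm}(\boldsymbol{G}_{[k]}^{B_i})+1$; output $\beta_{\text{UMCD}}=k$ (a fixed execution for each subinstance). *)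

theory Defs
  imports Complex_Main
begin

text \<open>An index coding instance with receivers [m] = {1..m}; receiver i wants message i
  and has side information A i, a subset of [m] not containing i.\<close>
definition ic_instance :: "nat \<Rightarrow> (nat \<Rightarrow> nat set) \<Rightarrow> bool" where
  "ic_instance m A \<longleftrightarrow> (\<forall>i\<in>{1..m}. A i \<subseteq> {1..m} - {i})"

text \<open>MDS code length of the subinstance on receiver set M (side information A i \<inter> M).\<close>
definition beta_MDS :: "(nat \<Rightarrow> nat set) \<Rightarrow> nat set \<Rightarrow> nat" where
  "beta_MDS A M = card M - Min ((\<lambda>i. card (M \<inter> A i)) ` M)"

text \<open>Maximum number of 1-entries in distinct rows and columns of the 0/1 matrix whose
  rows are given by the list of sets (row r has a 1 in column c iff c \<in> rows ! r),
  restricted to the columns L.\<close>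
definition mcm :: "nat set list \<Rightarrow> nat set \<Rightarrow> nat" where
  "mcm rows L = Max {card P | P. P \<subseteq> {(r, c). r < length rows \<and> c \<in> L \<and> c \<in> rows ! r}
                              \<and> inj_on fst P \<and> inj_on snd P}"

text \<open>One iteration of the UMCD algorithm on the subinstance with receiver set V.
  State: (remaining set N, rows of the matrix built so far).\<close>
definition umcd_step :: "(nat \<Rightarrow> nat set) \<Rightarrow> nat set \<Rightarrow>
    nat set \<times> nat set list \<Rightarrow> nat set \<times> nat set list \<Rightarrow> bool" where
  "umcd_step A V s s' \<longleftrightarrow>
     (let N = fst s; rows = snd s;
          B = (\<lambda>i. V - (A i \<union> {i})) in
      N \<noteq> {} \<and>
      (\<exists>w \<in> N. (\<forall>u\<in>N. card (A w \<inter> V) \<le> card (A u \<inter> V)) \<and>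
         (let rows' = rows @ [insert w (A w \<inter> V)] in
          s' = ({i \<in> N - {w}. mcm rows' (insert i (B i)) \<noteq> mcm rows' (B i) + 1}, rows'))))"

definition umcd_output :: "(nat \<Rightarrow> nat set) \<Rightarrow> nat set \<Rightarrow> nat \<Rightarrow> bool" where
  "umcd_output A V k \<longleftrightarrow>
     (\<exists>rows. (umcd_step A V)\<^sup>*\<^sup>* (V, []) ({}, rows) \<and> length rows = k)"

definition fp_value :: "nat \<Rightarrow> (nat set \<Rightarrow> nat) \<Rightarrow> real" where
  "fp_value m f = Inf {(\<Sum>j<n. (\<gamma> :: nat \<Rightarrow> real) j * real (f (Ms j))) | (n::nat) (Ms :: nat \<Rightarrow> nat set) \<gamma>.
       (\<forall>j<n. Ms j \<subseteq> {1..m} \<and> Ms j \<noteq> {} \<and> 0 \<le> \<gamma> j \<and> \<gamma> j \<le> 1) \<and>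
       (\<forall>i\<in>{1..m}. 1 \<le> (\<Sum>j\<in>{j. j < n \<and> i \<in> Ms j}. \<gamma> j))}"

definition beta_FPCC :: "nat \<Rightarrow> (nat \<Rightarrow> nat set) \<Rightarrow> real" where
  "beta_FPCC m A = fp_value m (beta_MDS A)"

end

theory Submission
  imports Defs
begin

text \<open>Fix a subinstance \<open>V\<close> and let \<open>d\<close> be the least side-information size in it, so
  that \<open>beta_MDS(V) = |V| - d\<close>. The rows chosen by UMCD keep a Hall surplus \<open>d\<close>: any \<open>t\<close>
  of them cover at least \<open>t + d\<close> columns of \<open>V\<close>. By Hall's theorem the \<open>k\<close> rows built so
  far can then be matched into the columns outside any \<open>d\<close> elements of the side information
  of a receiver \<open>i\<close>, whence \<open>k + d \<le> mcm(G[{i} \<union> B\<^sub>i]) + |A\<^sub>i|\<close>. The next chosen receiver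
  \<open>w\<close> survived the previous round, i.e. adding column \<open>w\<close> to \<open>B\<^sub>w\<close> does not raise \<open>mcm\<close>;
  this forces \<open>k + d + 1 \<le> |V|\<close>, and a column count shows that the surplus persists when the
  row of \<open>w\<close> is appended. Hence \<open>beta_UMCD(V) \<le> beta_MDS(V)\<close> for every \<open>V\<close>, and the
  fractional partition value is monotone in the values of the subinstances.\<close>

section \<open>Hall's marriage theorem\<close>

lemma Hall_condition_Diff_critical:
  fixes S :: "'i \<Rightarrow> 'a set"
  assumes fin: "finite I" "\<forall>i\<in>I. finite (S i)"
    and Hall: "\<forall>K\<subseteq>I. card K \<le> card (\<Union>(S ` K))"
    and J: "J \<subseteq> I" "card (\<Union>(S ` J)) \<le> card J"
  shows "\<forall>K\<subseteq>I - J. card K \<le> card (\<Union>i\<in>K. S i - \<Union>(S ` J))"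
proof (intro allI impI)
  fix K assume K: "K \<subseteq> I - J"
  have finite: "finite K" "finite J" using K J(1) fin(1) by (auto intro: finite_subset)
  then have finite_UN: "finite (\<Union>(S ` K))" "finite (\<Union>(S ` J))" using K J(1) fin(2) by auto
  have "card K + card J = card (K \<union> J)"
    using finite K by (intro card_Un_disjoint[symmetric]) auto
  also have "\<dots> \<le> card (\<Union>(S ` (K \<union> J)))"
    using K J(1) by (intro Hall[rule_format]) blast
  also have "\<Union>(S ` (K \<union> J)) = (\<Union>i\<in>K. S i - \<Union>(S ` J)) \<union> \<Union>(S ` J)" by blast
  also have "card \<dots> = card (\<Union>i\<in>K. S i - \<Union>(S ` J)) + card (\<Union>(S ` J))"
    using finite_UN by (intro card_Un_disjoint) auto
  finally show "card K \<le> card (\<Union>i\<in>K. S i - \<Union>(S ` J))" using J(2) by linarith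
qed

lemma Hall_condition_Diff_noncritical:
  fixes S :: "'i \<Rightarrow> 'a set"
  assumes surplus: "\<forall>K\<subseteq>I. K \<noteq> {} \<longrightarrow> K \<noteq> I \<longrightarrow> card K < card (\<Union>(S ` K))"
    and i: "i \<in> I"
  shows "\<forall>K\<subseteq>I - {i}. card K \<le> card (\<Union>j\<in>K. S j - {x})"
proof (intro allI impI)
  fix K assume K: "K \<subseteq> I - {i}"
  show "card K \<le> card (\<Union>j\<in>K. S j - {x})"
  proof (cases "K = {}")
    case False
    moreover have "K \<subseteq> I" "K \<noteq> I" using K i by auto
    ultimately have "card K < card (\<Union>(S ` K))" using surplus by simp
    moreover have "card (\<Union>(S ` K)) - card {x} \<le> card (\<Union>(S ` K) - {x})"
      by (rule diff_card_le_card_Diff) simp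
    moreover have "(\<Union>j\<in>K. S j - {x}) = \<Union>(S ` K) - {x}" by auto
    ultimately show ?thesis by simp
  qed simp
qed

theorem Hall_marriage:
  fixes S :: "'i \<Rightarrow> 'a set"
  assumes "finite I" "\<forall>i\<in>I. finite (S i)"
    and "\<forall>K\<subseteq>I. card K \<le> card (\<Union>(S ` K))"
  shows "\<exists>f. inj_on f I \<and> (\<forall>i\<in>I. f i \<in> S i)"
  using assms
proof (induction "card I" arbitrary: I S rule: less_induct)
  case less
  note fin = less.prems(1,2) and Hall = less.prems(3)
  show ?case
  proof (cases "\<exists>J\<subseteq>I. J \<noteq> {} \<and> J \<noteq> I \<and> card (\<Union>(S ` J)) \<le> card J")
    case True
    then obtain J where J: "J \<subseteq> I" "J \<noteq> {}" "J \<noteq> I" "card (\<Union>(S ` J)) \<le> card J"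
      by blast
    have smaller: "card J < card I" "card (I - J) < card I" and "finite J"
      using J fin(1) by (auto intro!: psubset_card_mono intro: finite_subset)
    have "\<exists>f. inj_on f J \<and> (\<forall>i\<in>J. f i \<in> S i)"
      by (rule less.hyps[OF smaller(1) \<open>finite J\<close>]) (use J(1) fin(2) Hall in blast)+
    moreover have "\<exists>f. inj_on f (I - J) \<and> (\<forall>i\<in>I - J. f i \<in> S i - \<Union>(S ` J))"
      by (rule less.hyps[OF smaller(2)])
        (use fin Hall_condition_Diff_critical[OF fin Hall J(1,4)] in auto)
    ultimately obtain f1 f2
      where f1: "inj_on f1 J" "\<forall>i\<in>J. f1 i \<in> S i"
        and f2: "inj_on f2 (I - J)" "\<forall>i\<in>I - J. f2 i \<in> S i - \<Union>(S ` J)"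
      by blast
    define f where "f i = (if i \<in> J then f1 i else f2 i)" for i
    have "inj_on f I"
    proof (rule inj_onI)
      fix x y assume xy: "x \<in> I" "y \<in> I" "f x = f y"
      have "f z \<in> \<Union>(S ` J) \<longleftrightarrow> z \<in> J" if "z \<in> I" for z
        using that f1(2) f2(2) by (auto simp: f_def)
      then have "x \<in> J \<longleftrightarrow> y \<in> J" using xy by metis
      then show "x = y" using xy f1(1) f2(1) by (auto simp: f_def dest: inj_onD)
    qed
    then show ?thesis using f1(2) f2(2) by (auto simp: f_def)
  next
    case False
    show ?thesis
    proof (cases "I = {}")
      case False
      then obtain i where i: "i \<in> I" by blast
      have "card {i} \<le> card (\<Union>(S ` {i}))" using Hall i by blast
      then obtain x where x: "x \<in> S i" by fastforce
      have surplus: "\<forall>K\<subseteq>I. K \<noteq> {} \<longrightarrow> K \<noteq> I \<longrightarrow> card K < card (\<Union>(S ` K))"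
        using \<open>\<not> (\<exists>J\<subseteq>I. _)\<close> not_le by blast
      have "card (I - {i}) < card I" using fin(1) i by (rule card_Diff1_less)
      then have "\<exists>g. inj_on g (I - {i}) \<and> (\<forall>j\<in>I - {i}. g j \<in> S j - {x})"
        by (rule less.hyps)
          (use fin Hall_condition_Diff_noncritical[OF surplus i] in auto)
      then obtain g where g: "inj_on g (I - {i})" "\<forall>j\<in>I - {i}. g j \<in> S j - {x}"
        by blast
      have "inj_on (g(i := x)) (insert i (I - {i}))" using g by (auto simp: inj_on_def)
      moreover have "insert i (I - {i}) = I" using i by blast
      moreover have "\<forall>j\<in>I. (g(i := x)) j \<in> S j" using g(2) x by auto
      ultimately show ?thesis by metis
    qed simp
  qed
qed

section \<open>Maximum matchings in 0/1 matrices\<close>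

definition matrix_matching :: "nat set list \<Rightarrow> nat set \<Rightarrow> (nat \<times> nat) set \<Rightarrow> bool" where
  "matrix_matching rows L P \<longleftrightarrow>
     P \<subseteq> {(r, c). r < length rows \<and> c \<in> L \<and> c \<in> rows ! r} \<and> inj_on fst P \<and> inj_on snd P"

lemma mcm_eq_Max: "mcm rows L = Max {card P | P. matrix_matching rows L P}"
  unfolding mcm_def matrix_matching_def by simp

lemma matrix_matching_mono:
  "matrix_matching rows L P \<Longrightarrow> L \<subseteq> L' \<Longrightarrow> matrix_matching rows L' P"
  unfolding matrix_matching_def by auto

lemma matrix_matching_finite: "finite L \<Longrightarrow> matrix_matching rows L P \<Longrightarrow> finite P"
  unfolding matrix_matching_def
  by (rule finite_subset[of _ "{..<length rows} \<times> L"]) auto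

lemma card_matrix_matching_le_card_cols:
  "finite L \<Longrightarrow> matrix_matching rows L P \<Longrightarrow> card P \<le> card L"
  unfolding matrix_matching_def by (intro card_inj_on_le[of snd]) auto

lemma finite_matrix_matching_cards:
  "finite L \<Longrightarrow> finite {card P | P. matrix_matching rows L P}"
  by (rule finite_subset[of _ "{..card L}"]) (auto dest: card_matrix_matching_le_card_cols)

lemma card_le_mcm: "finite L \<Longrightarrow> matrix_matching rows L P \<Longrightarrow> card P \<le> mcm rows L"
  unfolding mcm_eq_Max by (rule Max_ge) (auto simp: finite_matrix_matching_cards)

lemma mcm_attained:
  assumes "finite L"
  obtains P where "matrix_matching rows L P" "card P = mcm rows L"
proof -
  have "matrix_matching rows L {}" by (simp add: matrix_matching_def)
  then have "mcm rows L \<in> {card P | P. matrix_matching rows L P}"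
    unfolding mcm_eq_Max using assms by (intro Max_in finite_matrix_matching_cards) auto
  then show ?thesis by (auto intro: that)
qed

lemma mcm_le_card: "finite L \<Longrightarrow> mcm rows L \<le> card L"
  by (metis mcm_attained card_matrix_matching_le_card_cols)

lemma mcm_Nil: "mcm [] L = 0"
  unfolding mcm_def by simp

lemma mcm_mono: "L \<subseteq> L' \<Longrightarrow> finite L' \<Longrightarrow> mcm rows L \<le> mcm rows L'"
  by (metis mcm_attained card_le_mcm matrix_matching_mono finite_subset)

lemma mcm_le_mcm_Diff_add_card:
  assumes "finite L" "finite X"
  shows "mcm rows L \<le> mcm rows (L - X) + card X"
proof -
  obtain P where P: "matrix_matching rows L P" "card P = mcm rows L"
    using mcm_attained[OF assms(1)] .
  let ?R = "{p. snd p \<notin> X}"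
  have "finite P" using assms(1) P(1) by (rule matrix_matching_finite)
  then have "card P = card (P \<inter> ?R) + card (P - ?R)" by (rule card_Int_Diff)
  moreover have "card (P \<inter> ?R) \<le> mcm rows (L - X)"
    using P(1) assms(1)
    by (intro card_le_mcm) (auto simp: matrix_matching_def intro: inj_on_subset)
  moreover have "card (P - ?R) \<le> card X"
    using P(1) assms(2)
    by (intro card_inj_on_le[of snd]) (auto simp: matrix_matching_def intro: inj_on_subset)
  ultimately show ?thesis using P(2) by linarith
qed

lemma mcm_insert_le: "finite L \<Longrightarrow> mcm rows (insert i L) \<le> mcm rows L + 1"
  using mcm_le_mcm_Diff_add_card[of "insert i L" "{i}" rows] mcm_mono[of "insert i L - {i}" L rows]
  by auto

text \<open>A matching uses at most \<open>length rows - card T\<close> rows outside \<open>T\<close>, and its entries in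
  the rows of \<open>T\<close> lie in distinct columns covered by these rows.\<close>
lemma mcm_add_card_le:
  assumes "finite L" "T \<subseteq> {..<length rows}"
  shows "mcm rows L + card T \<le> length rows + card ((\<Union>t\<in>T. rows ! t) \<inter> L)"
proof -
  obtain P where P: "matrix_matching rows L P" "card P = mcm rows L"
    using mcm_attained[OF assms(1)] .
  let ?R = "{p. fst p \<in> T}"
  have "finite P" using assms(1) P(1) by (rule matrix_matching_finite)
  then have "card P = card (P \<inter> ?R) + card (P - ?R)" by (rule card_Int_Diff)
  moreover have "card (P \<inter> ?R) \<le> card ((\<Union>t\<in>T. rows ! t) \<inter> L)"
    using P(1) assms(1)
    by (intro card_inj_on_le[of snd]) (fastforce simp: matrix_matching_def intro: inj_on_subset)+
  moreover have "card (P - ?R) \<le> card ({..<length rows} - T)"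
    using P(1)
    by (intro card_inj_on_le[of fst]) (auto simp: matrix_matching_def intro: inj_on_subset)
  moreover have "card ({..<length rows} - T) = length rows - card T"
    using assms(2) by (simp add: card_Diff_subset finite_subset)
  moreover have "card T \<le> length rows" using card_mono[OF finite_lessThan assms(2)] by simp
  ultimately show ?thesis using P(2) by linarith
qed

lemma length_le_mcm_if_Hall:
  assumes "finite L"
    and "\<forall>T\<subseteq>{..<length rows}. card T \<le> card ((\<Union>t\<in>T. rows ! t) \<inter> L)"
  shows "length rows \<le> mcm rows L"
proof -
  obtain g where g: "inj_on g {..<length rows}" "\<forall>t<length rows. g t \<in> rows ! t \<inter> L"
    using Hall_marriage[of "{..<length rows}" "\<lambda>t. rows ! t \<inter> L"] assms by auto
  define P where "P = (\<lambda>t. (t, g t)) ` {..<length rows}"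
  have "matrix_matching rows L P"
    using g by (auto simp: matrix_matching_def P_def inj_on_def)
  moreover have "card P = length rows" by (simp add: P_def card_image inj_on_def)
  ultimately show ?thesis using card_le_mcm[OF assms(1)] by metis
qed

section \<open>Row families with surplus\<close>

definition has_surplus :: "nat set list \<Rightarrow> nat set \<Rightarrow> nat \<Rightarrow> bool" where
  "has_surplus rows V d \<longleftrightarrow> (\<forall>t<length rows. rows ! t \<subseteq> V) \<and>
     (\<forall>T\<subseteq>{..<length rows}. T \<noteq> {} \<longrightarrow> card T + d \<le> card (\<Union>t\<in>T. rows ! t))"

lemma has_surplus_length_le_mcm_Diff:
  assumes "finite V" "has_surplus rows V d" "D \<subseteq> V" "card D \<le> d"
  shows "length rows \<le> mcm rows (V - D)"
proof (rule length_le_mcm_if_Hall)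
  show "\<forall>T\<subseteq>{..<length rows}. card T \<le> card ((\<Union>t\<in>T. rows ! t) \<inter> (V - D))"
  proof (intro allI impI)
    fix T assume T: "T \<subseteq> {..<length rows}"
    show "card T \<le> card ((\<Union>t\<in>T. rows ! t) \<inter> (V - D))"
    proof (cases "T = {}")
      case False
      then have "card T + d \<le> card (\<Union>t\<in>T. rows ! t)"
        using assms(2) T by (auto simp: has_surplus_def)
      moreover have "card (\<Union>t\<in>T. rows ! t) - card D \<le> card ((\<Union>t\<in>T. rows ! t) - D)"
        using assms(1,3) by (intro diff_card_le_card_Diff) (rule finite_subset)
      moreover have "(\<Union>t\<in>T. rows ! t) \<inter> (V - D) = (\<Union>t\<in>T. rows ! t) - D"
        using assms(2) T by (auto simp: has_surplus_def)
      ultimately show ?thesis using assms(4) by auto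
    qed simp
  qed
qed (use assms(1) in simp)

lemma has_surplus_length_add_le_mcm:
  assumes "finite V" "has_surplus rows V d" "S \<subseteq> V" "d \<le> card S"
  shows "length rows + d \<le> mcm rows (V - S) + card S"
proof -
  obtain D where D: "D \<subseteq> S" "card D = d"
    using obtain_subset_with_card_n[OF assms(4)] by metis
  have fin: "finite S" "finite D" using assms(1,3) D(1) by (auto intro: finite_subset)
  have "length rows \<le> mcm rows (V - D)"
    by (rule has_surplus_length_le_mcm_Diff[OF assms(1,2)]) (use D assms(3) in auto)
  also have "\<dots> \<le> mcm rows (V - D - (S - D)) + card (S - D)"
    using assms(1) fin by (intro mcm_le_mcm_Diff_add_card) auto
  also have "V - D - (S - D) = V - S" using D(1) by blast
  also have "card (S - D) = card S - d" using D fin by (simp add: card_Diff_subset)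
  finally show ?thesis using assms(4) by linarith
qed

lemma has_surplus_length_add_less_card:
  assumes "finite V" "has_surplus rows V d" "S \<subseteq> V" "d \<le> card S" "i \<in> V" "i \<notin> S"
    and "mcm rows (V - S) = mcm rows (V - insert i S)"
  shows "length rows + d < card V"
proof -
  have "finite S" using assms(1,3) by (rule finite_subset[rotated])
  have "length rows + d \<le> mcm rows (V - insert i S) + card S"
    using has_surplus_length_add_le_mcm[OF assms(1-4)] assms(7) by simp
  also have "mcm rows (V - insert i S) \<le> card (V - insert i S)"
    using assms(1) by (intro mcm_le_card) simp
  also have "card (V - insert i S) = card V - (card S + 1)"
    using assms(3,5,6) \<open>finite S\<close> by (subst card_Diff_subset) auto
  finally show ?thesis
    using card_mono[OF assms(1), of "insert i S"] assms(3,5,6) \<open>finite S\<close> by simp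
qed

text \<open>Rows violating the surplus after appending \<open>insert i S\<close> would cover all of \<open>insert i S\<close>
  with only \<open>card T + d\<close> columns; counting the columns left outside \<open>insert i S\<close> then shows
  that deleting column \<open>i\<close> lowers \<open>mcm\<close>.\<close>
lemma has_surplus_Un_new_row:
  assumes "finite V" "has_surplus rows V d" "S \<subseteq> V" "d \<le> card S" "i \<in> V" "i \<notin> S"
    and "mcm rows (V - S) = mcm rows (V - insert i S)"
    and T: "T \<subseteq> {..<length rows}" "T \<noteq> {}"
  shows "card T + d + 1 \<le> card ((\<Union>t\<in>T. rows ! t) \<union> insert i S)"
proof (rule ccontr)
  let ?U = "\<Union>t\<in>T. rows ! t" and ?R = "insert i S"
  assume small: "\<not> card T + d + 1 \<le> card (?U \<union> ?R)"
  have "?U \<subseteq> V" using assms(2) T(1) by (auto simp: has_surplus_def)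
  then have fin: "finite ?U" "finite ?R" using assms(1,3,5) by (auto intro: finite_subset)
  have "card T + d \<le> card ?U" using assms(2) T by (auto simp: has_surplus_def)
  moreover have "card ?U \<le> card (?U \<union> ?R)" using fin by (intro card_mono) auto
  ultimately have card_U: "card ?U = card T + d" "card (?U \<union> ?R) = card ?U"
    using small by linarith+
  then have "?R \<subseteq> ?U" using fin by (metis card_subset_eq finite_Un sup.cobounded1 sup.absorb_iff1)
  have "mcm rows (V - ?R) + card T \<le> length rows + card (?U \<inter> (V - ?R))"
    using assms(1) T(1) by (intro mcm_add_card_le) auto
  also have "?U \<inter> (V - ?R) = ?U - ?R" using \<open>?U \<subseteq> V\<close> by blast
  also have "card (?U - ?R) = card T + d - (card S + 1)"
    using \<open>?R \<subseteq> ?U\<close> fin card_U(1) assms(6) by (simp add: card_Diff_subset finite_subset)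
  finally have "mcm rows (V - ?R) + card S + 1 \<le> length rows + d"
    using card_mono[OF fin(1) \<open>?R \<subseteq> ?U\<close>] card_U(1) assms(6) fin(2) by simp
  moreover have "length rows + d \<le> mcm rows (V - S) + card S"
    using has_surplus_length_add_le_mcm[OF assms(1-4)] .
  ultimately show False using assms(7) by linarith
qed

lemma has_surplus_append:
  assumes "finite V" "has_surplus rows V d" "S \<subseteq> V" "d \<le> card S" "i \<in> V" "i \<notin> S"
    and "mcm rows (V - S) = mcm rows (V - insert i S)"
  shows "has_surplus (rows @ [insert i S]) V d"
  unfolding has_surplus_def
proof (intro conjI allI impI)
  let ?rows = "rows @ [insert i S]" and ?k = "length rows"
  show "?rows ! t \<subseteq> V" if "t < length ?rows" for t
    using that assms(2,3,5) by (auto simp: has_surplus_def nth_append less_Suc_eq)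
  fix T assume T: "T \<subseteq> {..<length ?rows}" "T \<noteq> {}"
  show "card T + d \<le> card (\<Union>t\<in>T. ?rows ! t)"
  proof (cases "?k \<in> T")
    case False
    then have "T \<subseteq> {..<?k}" using T(1) by (auto simp: less_Suc_eq)
    moreover have "(\<Union>t\<in>T. ?rows ! t) = (\<Union>t\<in>T. rows ! t)"
      using \<open>T \<subseteq> {..<?k}\<close> by (auto simp: nth_append)
    ultimately show ?thesis using assms(2) T(2) by (auto simp: has_surplus_def)
  next
    case True
    define T' where "T' = T - {?k}"
    have T': "T' \<subseteq> {..<?k}" "T = insert ?k T'" "?k \<notin> T'"
      using T(1) True by (auto simp: T'_def less_Suc_eq)
    then have "finite T'" by (meson finite_lessThan finite_subset)
    have UN: "(\<Union>t\<in>T. ?rows ! t) = (\<Union>t\<in>T'. rows ! t) \<union> insert i S"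
      using T' by (auto simp: nth_append)
    show ?thesis
    proof (cases "T' = {}")
      case True
      then show ?thesis using UN T'(2) assms(4,6) finite_subset[OF assms(3,1)] by simp
    next
      case False
      then show ?thesis using has_surplus_Un_new_row[OF assms T'(1) False] UN T'(2,3) \<open>finite T'\<close>
        by simp
    qed
  qed
qed

lemma mcm_insert_eq_if_ne_Suc:
  assumes "finite L" "mcm rows (insert i L) \<noteq> mcm rows L + 1"
  shows "mcm rows (insert i L) = mcm rows L"
  using assms(2) mcm_insert_le[OF assms(1), of rows i] mcm_mono[of L "insert i L" rows] assms(1)
  by fastforce

section \<open>The UMCD bound\<close>

definition umcd_invariant ::
    "(nat \<Rightarrow> nat set) \<Rightarrow> nat set \<Rightarrow> nat \<Rightarrow> nat set \<times> nat set list \<Rightarrow> bool" where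
  "umcd_invariant A V d s \<longleftrightarrow>
     (let (N, rows) = s in
      N \<subseteq> V \<and> has_surplus rows V d \<and> length rows + d \<le> card V \<and>
      (\<forall>i\<in>N. mcm rows (insert i (V - (A i \<union> {i}))) \<noteq> mcm rows (V - (A i \<union> {i})) + 1))"

lemma umcd_step_preserves_invariant:
  assumes "finite V" "\<forall>i\<in>V. i \<notin> A i \<and> d \<le> card (A i \<inter> V)"
    and "umcd_step A V s s'" "umcd_invariant A V d s"
  shows "umcd_invariant A V d s'"
proof -
  obtain N rows where s: "s = (N, rows)" by fastforce
  let ?row = "\<lambda>w. insert w (A w \<inter> V)"
  from assms(3) obtain w where w: "w \<in> N"
    and s': "s' = ({i \<in> N - {w}. mcm (rows @ [?row w]) (insert i (V - (A i \<union> {i})))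
                      \<noteq> mcm (rows @ [?row w]) (V - (A i \<union> {i})) + 1}, rows @ [?row w])"
    unfolding umcd_step_def Let_def s by auto
  have inv: "N \<subseteq> V" "has_surplus rows V d"
    "mcm rows (insert w (V - (A w \<union> {w}))) \<noteq> mcm rows (V - (A w \<union> {w})) + 1"
    using assms(4) w by (auto simp: umcd_invariant_def s)
  then have "w \<in> V" using w by blast
  then have side: "A w \<inter> V \<subseteq> V" "d \<le> card (A w \<inter> V)" "w \<notin> A w \<inter> V"
    using assms(2) by auto
  have "insert w (V - (A w \<union> {w})) = V - A w \<inter> V" "V - (A w \<union> {w}) = V - ?row w"
    using \<open>w \<in> V\<close> side(3) by auto
  then have "mcm rows (V - A w \<inter> V) = mcm rows (V - ?row w)"
    using mcm_insert_eq_if_ne_Suc[OF _ inv(3)] assms(1) by simp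
  note step = assms(1) inv(2) side(1,2) \<open>w \<in> V\<close> side(3) this
  have "length rows + d < card V" "has_surplus (rows @ [?row w]) V d"
    using has_surplus_length_add_less_card[OF step] has_surplus_append[OF step] by simp_all
  then show ?thesis using inv(1) by (auto simp: umcd_invariant_def s')
qed

lemma umcd_output_le_beta_MDS:
  assumes "finite V" "V \<noteq> {}" "\<forall>i\<in>V. i \<notin> A i" "umcd_output A V k"
  shows "k \<le> beta_MDS A V"
proof -
  define d where "d = Min ((\<lambda>i. card (V \<inter> A i)) ` V)"
  have d: "\<forall>i\<in>V. i \<notin> A i \<and> d \<le> card (A i \<inter> V)"
    using assms(1,3) by (auto simp: d_def Int_commute)
  obtain rows where rows: "(umcd_step A V)\<^sup>*\<^sup>* (V, []) ({}, rows)" "length rows = k"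
    using assms(4) by (auto simp: umcd_output_def)
  have "umcd_invariant A V d (V, [])"
  proof -
    obtain i where "i \<in> V" using assms(2) by blast
    then have "d \<le> card V" using d assms(1) by (meson card_mono inf_le2 le_trans)
    then show ?thesis by (simp add: umcd_invariant_def has_surplus_def mcm_Nil)
  qed
  with rows(1) have "umcd_invariant A V d ({}, rows)"
    by (induction rule: rtranclp_induct)
      (use umcd_step_preserves_invariant[OF assms(1) d] in blast)+
  then have "k + d \<le> card V" using rows(2) by (simp add: umcd_invariant_def)
  then show ?thesis by (simp add: beta_MDS_def d_def)
qed

lemma fp_value_mono:
  assumes "\<And>M. M \<subseteq> {1..m} \<Longrightarrow> M \<noteq> {} \<Longrightarrow> f M \<le> g M"
  shows "fp_value m f \<le> fp_value m g"
proof -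
  define feasible where "feasible n Ms \<gamma> \<longleftrightarrow>
    (\<forall>j<n. Ms j \<subseteq> {1..m} \<and> Ms j \<noteq> {} \<and> 0 \<le> \<gamma> j \<and> \<gamma> j \<le> 1) \<and>
    (\<forall>i\<in>{1..m}. 1 \<le> (\<Sum>j\<in>{j. j < n \<and> i \<in> Ms j}. \<gamma> j))"
    for n and Ms :: "nat \<Rightarrow> nat set" and \<gamma> :: "nat \<Rightarrow> real"
  define costs where "costs h = {\<Sum>j<n. \<gamma> j * real (h (Ms j)) | n Ms \<gamma>. feasible n Ms \<gamma>}"
    for h :: "nat set \<Rightarrow> nat"
  have fp_value_eq: "fp_value m h = Inf (costs h)" for h
    by (simp add: fp_value_def costs_def feasible_def)
  have "Inf (costs f) \<le> Inf (costs g)"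
  proof (rule cInf_mono)
    have "{j. j < m \<and> i \<in> {Suc j}} = {i - 1}" if "i \<in> {1..m}" for i
      using that by auto
    then have "feasible m (\<lambda>j. {Suc j}) (\<lambda>_. 1)" by (simp add: feasible_def)
    then show "costs g \<noteq> {}" by (auto simp: costs_def)
    show "bdd_below (costs f)"
      by (rule bdd_belowI[of _ 0]) (auto simp: costs_def feasible_def intro!: sum_nonneg)
  next
    fix b assume "b \<in> costs g"
    then obtain n Ms \<gamma> where b: "b = (\<Sum>j<n. \<gamma> j * real (g (Ms j)))" "feasible n Ms \<gamma>"
      by (auto simp: costs_def)
    then have "(\<Sum>j<n. \<gamma> j * real (f (Ms j))) \<le> b"
      using assms by (auto simp: feasible_def intro!: sum_mono mult_left_mono)
    moreover have "(\<Sum>j<n. \<gamma> j * real (f (Ms j))) \<in> costs f"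
      using b(2) by (auto simp: costs_def)
    ultimately show "\<exists>a\<in>costs f. a \<le> b" by blast
  qed
  then show ?thesis by (simp add: fp_value_eq)
qed

theorem proposition13:
  fixes m :: nat and A :: "nat \<Rightarrow> nat set" and beta_UMCD :: "nat set \<Rightarrow> nat"
  assumes "ic_instance m A"
    and "\<And>M. M \<subseteq> {1..m} \<Longrightarrow> M \<noteq> {} \<Longrightarrow> umcd_output A M (beta_UMCD M)"
  shows "fp_value m beta_UMCD \<le> beta_FPCC m A"
  unfolding beta_FPCC_def
proof (rule fp_value_mono)
  fix M assume M: "M \<subseteq> {1..m}" "M \<noteq> {}"
  then have "\<forall>i\<in>M. i \<notin> A i" using assms(1) by (auto simp: ic_instance_def)
  then show "beta_UMCD M \<le> beta_MDS A M"
    using M assms(2) by (intro umcd_output_le_beta_MDS) (auto intro: finite_subset)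
qed

end
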